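(* Let $f:\mathbb{R}^n\to\mathbb{R}^n$ be continuously differentiable and monotone, and let $q:\mathbb{R}^n\to\mathbb{R}\cup\{+\infty\}$ be proper, convex and lower semicontinuous. Given $x\in\mathbb{R}^n$ and $d\in\mathrm{dom}\,\partial q$, define \[\mu_f(x)=\min\{\langle\nabla f(x)u,u\rangle:\|u\|=1\},\] \[\mu_q(d)=\lim_{\rho\downarrow0}\inf\Bigl\{\frac{\langle d_1^*-d_2^*,d_1-d_2\rangle}{\|d_1-d_2\|^2}: d_i\in\mathcal{B}_\rho(d),\ (d_i,d_i^* )\in\mathrm{gph}\,\partial q,\ i=1,2,\ d_1\ne d_2\Bigr\}.\] Then for every $d^*\in\partial q(d)$, \[\min_{\|s\|=1}\operatorname{dist}\bigl(0,\nabla f(x)^Ts+D^*(\partial q)(d,d^* )(s)\bigr)\ge\mu_f(x)+\mu_q(d).\]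
   Context: $f$ monotone means $\langle f(x_2)-f(x_1),x_2-x_1\rangle\ge0$ for all $x_1,x_2$. $\mathcal{B}_\rho(d)$ is the closed ball of radius $\rho$ around $d$. The limiting coderivative is $D^*F(\bar x,\bar y)(v^* )=\{u^*:(u^*,-v^* )\in N_{\mathrm{gph}\, F}(\bar x,\bar y)\}$, where $N_C(\bar z)$ is the limiting (Mordukhovich) normal cone: the set of limits of $z_k^*\in\widehat N_C(z_k)$ with $z_k\to\bar z$ in $C$, and $\widehat N_C(z)$ is the polar of the contingent cone $T_C(z)=\{w:\exists t_k\downarrow0,w_k\to w,\ z+t_kw_k\in C\}$. *)

theory Defs
  imports "HOL-Analysis.Analysis"
begin

definition monotone_map :: "('a::real_inner \<Rightarrow> 'a) \<Rightarrow> bool" where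
  "monotone_map f \<longleftrightarrow> (\<forall>x1 x2. (f x2 - f x1) \<bullet> (x2 - x1) \<ge> 0)"

definition proper_fun :: "('a \<Rightarrow> ereal) \<Rightarrow> bool" where
  "proper_fun q \<longleftrightarrow> (\<forall>x. q x \<noteq> -\<infinity>) \<and> (\<exists>x. q x < \<infinity>)"

definition convex_efun :: "('a::real_vector \<Rightarrow> ereal) \<Rightarrow> bool" where
  "convex_efun q \<longleftrightarrow> convex {(x, r::real). q x \<le> ereal r}"

definition lsc_fun :: "('a::topological_space \<Rightarrow> ereal) \<Rightarrow> bool" where
  "lsc_fun q \<longleftrightarrow> (\<forall>x. q x \<le> Liminf (at x) q)"

definition subdiff :: "('a::real_inner \<Rightarrow> ereal) \<Rightarrow> 'a \<Rightarrow> 'a set" where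
  "subdiff q d = (if \<bar>q d\<bar> \<noteq> \<infinity>
      then {v. \<forall>y. q y \<ge> q d + ereal (v \<bullet> (y - d))} else {})"

definition graph_of :: "('a \<Rightarrow> 'b set) \<Rightarrow> ('a \<times> 'b) set" where
  "graph_of F = {(x, y). y \<in> F x}"

definition contingent_cone :: "'a::real_normed_vector set \<Rightarrow> 'a \<Rightarrow> 'a set" where
  "contingent_cone C z = {w. \<exists>t wk. (\<forall>k. t k > 0) \<and> t \<longlonglongrightarrow> 0 \<and> wk \<longlonglongrightarrow> w
        \<and> (\<forall>k. z + t k *\<^sub>R wk k \<in> C)}"

definition regular_normal_cone :: "'a::real_inner set \<Rightarrow> 'a \<Rightarrow> 'a set" where
  "regular_normal_cone C z = {v. \<forall>w \<in> contingent_cone C z. v \<bullet> w \<le> 0}"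

definition limiting_normal_cone :: "'a::real_inner set \<Rightarrow> 'a \<Rightarrow> 'a set" where
  "limiting_normal_cone C z = {v. \<exists>zk vk. (\<forall>k. zk k \<in> C \<and> vk k \<in> regular_normal_cone C (zk k))
        \<and> zk \<longlonglongrightarrow> z \<and> vk \<longlonglongrightarrow> v}"

definition coderivative :: "('a::real_inner \<Rightarrow> 'b::real_inner set) \<Rightarrow> 'a \<Rightarrow> 'b \<Rightarrow> 'b \<Rightarrow> 'a set" where
  "coderivative F x y v = {u. (u, - v) \<in> limiting_normal_cone (graph_of F) (x, y)}"

(* distance from 0 to a set, +\<infinity> for the empty set *)
definition edist0 :: "'a::real_normed_vector set \<Rightarrow> ereal" where
  "edist0 S = (INF w\<in>S. ereal (norm w))"

(* mu_f(x) with Jacobian matrix J *)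
definition mu_f :: "real^'n^'n \<Rightarrow> real" where
  "mu_f A = Inf ((\<lambda>u. (A *v u) \<bullet> u) ` sphere 0 1)"

definition mu_q :: "(real^'n \<Rightarrow> ereal) \<Rightarrow> real^'n \<Rightarrow> ereal" where
  "mu_q q d = Lim (at_right (0::real)) (\<lambda>\<rho>.
      Inf {ereal (((d1s - d2s) \<bullet> (d1 - d2)) / (norm (d1 - d2))\<^sup>2) | d1 d2 d1s d2s.
             d1 \<in> cball d \<rho> \<and> d2 \<in> cball d \<rho> \<and> d1s \<in> subdiff q d1 \<and> d2s \<in> subdiff q d2
             \<and> d1 \<noteq> d2})"

end

theory Submission
  imports Defs
begin

(* For a unit vector s we have <J(x)\<^sup>T s, s> = <J(x) s, s> \<ge> mu_f(J x), so by Cauchy-Schwarz it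
   suffices to show <u, s> \<ge> \<mu> for every u \<in> D\<^sup>* \<partial>q(d, ds)(s) and every \<mu> < mu_q(d).
   The subdifferential \<partial>q is maximal monotone (the proximal point y of q at v solves
   v - y \<in> \<partial>q(y)) and, by the definition of mu_q, \<mu>-strongly monotone on a ball around d.
   At a graph point (z, zs) near d, solving v - y \<in> \<partial>q(y) for v = z + zs + t h with t \<rightarrow> 0
   produces tangent directions (w, h - w) to the graph with \<mu> |w|\<^sup>2 \<le> <h - w, w>.  Testing a
   regular normal (a, c) against the direction given by h = a + (1 + 2\<mu>) c yields
   \<mu> |c|\<^sup>2 \<le> -<a, c>, and this bound passes to limiting normals (u, -s).  Only convexity and
   lower semicontinuity of q enter. *)

section \<open>Strongly monotone set-valued maps\<close>

definition strongly_monotone_on :: "'a::real_inner set \<Rightarrow> real \<Rightarrow> ('a \<Rightarrow> 'a set) \<Rightarrow> bool" where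
  "strongly_monotone_on S \<mu> T \<longleftrightarrow>
     (\<forall>x\<in>S. \<forall>y\<in>S. \<forall>u\<in>T x. \<forall>v\<in>T y. \<mu> * (norm (x - y))\<^sup>2 \<le> (u - v) \<bullet> (x - y))"

lemma strongly_monotone_onD:
  "strongly_monotone_on S \<mu> T \<Longrightarrow> x \<in> S \<Longrightarrow> y \<in> S \<Longrightarrow> u \<in> T x \<Longrightarrow> v \<in> T y
    \<Longrightarrow> \<mu> * (norm (x - y))\<^sup>2 \<le> (u - v) \<bullet> (x - y)"
  unfolding strongly_monotone_on_def by blast

lemma strongly_monotone_on_subset:
  "strongly_monotone_on S \<mu> T \<Longrightarrow> S' \<subseteq> S \<Longrightarrow> strongly_monotone_on S' \<mu> T"
  unfolding strongly_monotone_on_def by blast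

lemma subdiffE:
  assumes "v \<in> subdiff q d"
  obtains D where "q d = ereal D" "\<And>y. ereal (D + v \<bullet> (y - d)) \<le> q y"
proof -
  from assms have fin: "\<bar>q d\<bar> \<noteq> \<infinity>" and le: "\<And>y. q d + ereal (v \<bullet> (y - d)) \<le> q y"
    by (auto simp: subdiff_def split: if_splits)
  from fin obtain D where "q d = ereal D" by (cases "q d") auto
  with le that show ?thesis by simp
qed

lemma subdiff_monotone: "strongly_monotone_on UNIV 0 (subdiff q)"
  unfolding strongly_monotone_on_def
proof (intro ballI)
  fix x y u v assume u: "u \<in> subdiff q x" and v: "v \<in> subdiff q y"
  obtain X where X: "q x = ereal X" "\<And>z. ereal (X + u \<bullet> (z - x)) \<le> q z" using u by (elim subdiffE) blast
  obtain Y where Y: "q y = ereal Y" "\<And>z. ereal (Y + v \<bullet> (z - y)) \<le> q z" using v by (elim subdiffE) blast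
  have "X + u \<bullet> (y - x) \<le> Y" "Y + v \<bullet> (x - y) \<le> X" using X Y by (metis ereal_less_eq(3))+
  then show "0 * (norm (x - y))\<^sup>2 \<le> (u - v) \<bullet> (x - y)"
    by (simp add: inner_diff_left inner_diff_right inner_commute)
qed

section \<open>Proximal points and maximal monotonicity of the subdifferential\<close>

lemma convex_efunD:
  assumes "convex_efun q" "q x \<le> ereal a" "q y \<le> ereal b" "0 \<le> t" "t \<le> 1"
  shows "q ((1 - t) *\<^sub>R x + t *\<^sub>R y) \<le> ereal ((1 - t) * a + t * b)"
proof -
  have "(1 - t) *\<^sub>R (x, a) + t *\<^sub>R (y, b) \<in> {(x, r::real). q x \<le> ereal r}"
    using assms by (intro convexD) (auto simp: convex_efun_def)
  then show ?thesis by simp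
qed

lemma norm_diff_sq_along_segment:
  fixes y z v :: "'a::real_inner"
  shows "(norm ((1 - t) *\<^sub>R y + t *\<^sub>R z - v))\<^sup>2
    = (norm (y - v))\<^sup>2 - 2 * t * ((v - y) \<bullet> (z - y)) + t\<^sup>2 * (norm (z - y))\<^sup>2"
proof -
  have "(1 - t) *\<^sub>R y + t *\<^sub>R z - v = (y - v) + t *\<^sub>R (z - y)" by (simp add: algebra_simps)
  then show ?thesis
    unfolding power2_norm_eq_inner
    by (simp add: inner_add_left inner_add_right inner_diff_left inner_diff_right inner_commute
        power2_eq_square algebra_simps)
qed

lemma prox_minimizer_in_subdiff:
  fixes q :: "'a::real_inner \<Rightarrow> ereal"
  assumes cvx: "convex_efun q" and y: "q y = ereal Y"
    and min: "\<And>z. q y + ereal ((norm (y - v))\<^sup>2 / 2) \<le> q z + ereal ((norm (z - v))\<^sup>2 / 2)"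
  shows "v - y \<in> subdiff q y"
proof -
  have "ereal (Y + (v - y) \<bullet> (z - y)) \<le> q z" for z
  proof (cases "q z")
    case (real Z)
    define g where "g = (v - y) \<bullet> (z - y)"
    have small: "Y + g - Z \<le> t * ((norm (z - y))\<^sup>2 / 2)" if t: "0 < t" "t \<le> 1" for t
    proof -
      define p where "p = (1 - t) *\<^sub>R y + t *\<^sub>R z"
      have "q p \<le> ereal ((1 - t) * Y + t * Z)"
        unfolding p_def using cvx y real t by (intro convex_efunD) auto
      then have "q y + ereal ((norm (y - v))\<^sup>2 / 2) \<le> ereal ((1 - t) * Y + t * Z) + ereal ((norm (p - v))\<^sup>2 / 2)"
        using min[of p] by (meson add_right_mono order.trans)
      then have "Y + (norm (y - v))\<^sup>2 / 2 \<le> (1 - t) * Y + t * Z + (norm (p - v))\<^sup>2 / 2"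
        using y by simp
      moreover have "(1 - t) * Y + t * Z + ((norm (y - v))\<^sup>2 - 2 * t * g + t\<^sup>2 * (norm (z - y))\<^sup>2) / 2
          - (Y + (norm (y - v))\<^sup>2 / 2) = t * (t * ((norm (z - y))\<^sup>2 / 2)) - t * (Y + g - Z)"
        by (simp add: field_simps power2_eq_square)
      ultimately have "t * (Y + g - Z) \<le> t * (t * ((norm (z - y))\<^sup>2 / 2))"
        unfolding p_def norm_diff_sq_along_segment g_def by linarith
      then show ?thesis using t by simp
    qed
    have "Y + g - Z \<le> 0"
    proof (rule tendsto_le[OF trivial_limit_at_right_real])
      show "((\<lambda>t. t * ((norm (z - y))\<^sup>2 / 2)) \<longlongrightarrow> 0) (at_right 0)"
        by (auto intro!: tendsto_eq_intros)
      show "\<forall>\<^sub>F t in at_right 0. Y + g - Z \<le> t * ((norm (z - y))\<^sup>2 / 2)"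
        unfolding eventually_at_right_field by (intro exI[of _ 1] conjI allI impI small) auto
    qed simp
    then show ?thesis using real by (simp add: g_def)
  qed (use min[of z] y in auto)
  then show ?thesis using y by (simp add: subdiff_def)
qed

lemma lsc_fun_le_limit:
  fixes q :: "'a::metric_space \<Rightarrow> ereal"
  assumes lsc: "lsc_fun q" and X: "X \<longlonglongrightarrow> y" and b: "b \<longlonglongrightarrow> B"
    and le: "\<forall>\<^sub>F k in sequentially. q (X k) \<le> ereal (b k)"
  shows "q y \<le> ereal B"
proof (rule ccontr)
  assume "\<not> q y \<le> ereal B"
  then obtain c where "ereal B < ereal c" "ereal c < q y" by (meson ereal_dense2 not_le)
  then have c: "B < c" "ereal c < q y" by simp_all
  have "ereal c < Liminf (at y) q" using c(2) lsc unfolding lsc_fun_def by (meson order.strict_trans2)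
  then have "\<forall>\<^sub>F z in at y. ereal c < q z" by (rule less_LiminfD)
  with c(2) have "\<forall>\<^sub>F z in nhds y. ereal c < q z"
    unfolding eventually_at_filter by (auto elim: eventually_mono)
  then have "\<forall>\<^sub>F k in sequentially. ereal c < q (X k)" using X by (rule eventually_compose_filterlim)
  with le have "\<forall>\<^sub>F k in sequentially. c \<le> b k"
    by eventually_elim (meson ereal_less_eq(3) less_imp_le order.strict_trans2)
  then have "c \<le> B" using b by (intro tendsto_lowerbound) auto
  with c(1) show False by simp
qed

lemma half_sq_norm_diff_plus_inner:
  fixes z v p :: "'a::real_inner"
  shows "(norm (z - v))\<^sup>2 / 2 + p \<bullet> (z - v) = (norm (z - (v - p)))\<^sup>2 / 2 - (norm p)\<^sup>2 / 2"
  unfolding power2_norm_eq_inner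
  by (simp add: inner_diff_left inner_diff_right inner_add_left inner_add_right inner_commute
      field_simps)

lemma prox_point_exists:
  fixes q :: "'a::euclidean_space \<Rightarrow> ereal"
  assumes lsc: "lsc_fun q" and ds: "ds \<in> subdiff q d"
  obtains y Y where "q y = ereal Y"
    "\<And>z. q y + ereal ((norm (y - v))\<^sup>2 / 2) \<le> q z + ereal ((norm (z - v))\<^sup>2 / 2)"
proof -
  obtain D where qd: "q d = ereal D" and minor: "\<And>z. ereal (D + ds \<bullet> (z - d)) \<le> q z"
    using ds by (elim subdiffE) blast
  define G where "G z = q z + ereal ((norm (z - v))\<^sup>2 / 2)" for z
  (* Completing the square in the affine minorant makes G coercive. *)
  define c where "c = D + ds \<bullet> (v - d) - (norm ds)\<^sup>2 / 2"
  have G_ge: "ereal (c + (norm (z - (v - ds)))\<^sup>2 / 2) \<le> G z" for z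
  proof -
    have "c + (norm (z - (v - ds)))\<^sup>2 / 2 = D + ds \<bullet> (z - d) + (norm (z - v))\<^sup>2 / 2"
      using half_sq_norm_diff_plus_inner[of z v ds]
      by (simp add: c_def inner_diff_right algebra_simps)
    then show ?thesis unfolding G_def by (metis add_right_mono minor plus_ereal.simps(1))
  qed
  define m where "m = (INF z. G z)"
  have "ereal c \<le> m" unfolding m_def
  proof (rule INF_greatest)
    fix z
    have "ereal c \<le> ereal (c + (norm (z - (v - ds)))\<^sup>2 / 2)" by simp
    then show "ereal c \<le> G z" using G_ge by (rule order.trans)
  qed
  moreover have "m \<le> G d" unfolding m_def by (rule INF_lower) simp
  ultimately obtain M where M: "m = ereal M" by (cases m) (auto simp: G_def qd)
  have "\<exists>y. G y < ereal (M + 1 / Suc k)" for k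
  proof -
    have "m < ereal (M + 1 / Suc k)" using M by simp
    then show ?thesis unfolding m_def by (simp add: INF_less_iff)
  qed
  then obtain yk where yk: "\<And>k. G (yk k) < ereal (M + 1 / Suc k)" by metis
  have "yk k \<in> cball (v - ds) (sqrt (2 * (M + 1 - c)))" for k
  proof -
    have "ereal (c + (norm (yk k - (v - ds)))\<^sup>2 / 2) \<le> G (yk k)" by (rule G_ge)
    also have "\<dots> < ereal (M + 1 / Suc k)" by (rule yk)
    also have "\<dots> \<le> ereal (M + 1)" by (simp add: divide_le_eq)
    finally have "(norm (yk k - (v - ds)))\<^sup>2 \<le> 2 * (M + 1 - c)" by simp
    then show ?thesis by (simp add: dist_norm norm_minus_commute real_le_rsqrt)
  qed
  then obtain y r where r: "strict_mono r" "(yk \<circ> r) \<longlonglongrightarrow> y"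
    using compact_cball[THEN compact_imp_seq_compact, THEN seq_compactE] by metis
  have qy: "q y \<le> ereal (M - (norm (y - v))\<^sup>2 / 2)"
  proof (rule lsc_fun_le_limit[OF lsc r(2)])
    have "(\<lambda>k. 1 / real (Suc (r k))) \<longlonglongrightarrow> 0"
      using LIMSEQ_subseq_LIMSEQ[OF LIMSEQ_Suc[OF lim_1_over_n] r(1)] by (simp add: o_def)
    then have "(\<lambda>k. M + 1 / Suc (r k)) \<longlonglongrightarrow> M"
      using tendsto_add[OF tendsto_const] by fastforce
    moreover have "(\<lambda>k. (norm ((yk \<circ> r) k - v))\<^sup>2 / 2) \<longlonglongrightarrow> (norm (y - v))\<^sup>2 / 2"
      using r(2) by (intro tendsto_intros) (simp_all add: o_def)
    ultimately show "(\<lambda>k. M + 1 / Suc (r k) - (norm ((yk \<circ> r) k - v))\<^sup>2 / 2) \<longlonglongrightarrow> M - (norm (y - v))\<^sup>2 / 2"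
      by (rule tendsto_diff)
    show "\<forall>\<^sub>F k in sequentially. q ((yk \<circ> r) k) \<le> ereal (M + 1 / Suc (r k) - (norm ((yk \<circ> r) k - v))\<^sup>2 / 2)"
    proof (intro always_eventually allI)
      fix k
      have "q (yk (r k)) + ereal ((norm (yk (r k) - v))\<^sup>2 / 2) < ereal (M + 1 / Suc (r k))"
        using yk unfolding G_def .
      then show "q ((yk \<circ> r) k) \<le> ereal (M + 1 / Suc (r k) - (norm ((yk \<circ> r) k - v))\<^sup>2 / 2)"
        by (cases "q (yk (r k))") auto
    qed
  qed
  obtain Y where Y: "q y = ereal Y"
    using qy minor[of y] by (cases "q y") auto
  moreover have "G y \<le> G z" for z
  proof -
    have "G y \<le> m" using qy Y by (simp add: G_def M)
    also have "m \<le> G z" unfolding m_def by (rule INF_lower) simp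
    finally show ?thesis .
  qed
  ultimately show ?thesis using that unfolding G_def by blast
qed

lemma subdiff_resolvent_exists:
  fixes q :: "'a::euclidean_space \<Rightarrow> ereal"
  assumes "convex_efun q" "lsc_fun q" "subdiff q d \<noteq> {}"
  shows "\<exists>y. v - y \<in> subdiff q y"
  using assms prox_point_exists prox_minimizer_in_subdiff by (metis ex_in_conv)

section \<open>Normals to the graph of a locally strongly monotone operator\<close>

lemma resolvent_step_norm_le:
  fixes T :: "'a::real_inner \<Rightarrow> 'a set"
  assumes mono: "strongly_monotone_on UNIV 0 T" and zs: "zs \<in> T z"
    and y: "z + zs + t *\<^sub>R h - y \<in> T y" and t: "0 \<le> t"
  shows "norm (y - z) \<le> t * norm h"
proof -
  have "0 \<le> ((z + zs + t *\<^sub>R h - y) - zs) \<bullet> (y - z)"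
    using strongly_monotone_onD[OF mono _ _ y zs] by simp
  also have "\<dots> = t * (h \<bullet> (y - z)) - (norm (y - z))\<^sup>2"
    by (simp add: power2_norm_eq_inner inner_diff_left inner_diff_right inner_add_left inner_add_right
        inner_commute algebra_simps)
  also have "\<dots> \<le> t * norm h * norm (y - z) - (norm (y - z))\<^sup>2"
    using mult_left_mono[OF norm_cauchy_schwarz[of h "y - z"] t] by (simp add: mult.assoc)
  finally have "norm (y - z) * norm (y - z) \<le> (t * norm h) * norm (y - z)"
    by (simp add: power2_eq_square)
  then show ?thesis using t by (cases "norm (y - z) = 0") auto
qed

lemma resolvent_difference_quotients:
  fixes T :: "'a::real_inner \<Rightarrow> 'a set"
  assumes mono: "strongly_monotone_on UNIV 0 T" and res: "\<And>v. \<exists>y. v - y \<in> T y"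
    and r: "0 < r" and zs: "zs \<in> T z"
  obtains t W where "\<And>k. 0 < t k" "t \<longlonglongrightarrow> 0" "\<And>k. dist z (z + t k *\<^sub>R W k) < r"
    "\<And>k. norm (W k) \<le> norm h" "\<And>k. (z, zs) + t k *\<^sub>R (W k, h - W k) \<in> graph_of T"
proof -
  define c where "c = r / (norm h + 1)"
  have h1: "0 < norm h + 1" by (simp add: add_nonneg_pos)
  have c_pos: "0 < c" using r h1 by (simp add: c_def)
  have c_small: "c * norm h < r"
  proof -
    have "c * norm h < c * (norm h + 1)" using c_pos by simp
    also have "\<dots> = r" unfolding c_def using h1 by simp
    finally show ?thesis .
  qed
  define t where "t k = c / Suc k" for k
  have t_pos: "0 < t k" for k using c_pos by (simp add: t_def)
  have t_le: "t k \<le> c" for k using c_pos by (simp add: t_def field_simps)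
  have t_lim: "t \<longlonglongrightarrow> 0"
    using tendsto_mult_left[OF LIMSEQ_Suc[OF lim_1_over_n], of c] by (simp add: t_def[abs_def])
  have "\<exists>y. z + zs + t k *\<^sub>R h - y \<in> T y" for k by (rule res)
  then obtain Y where Y: "\<And>k. z + zs + t k *\<^sub>R h - Y k \<in> T (Y k)" by metis
  define W where "W k = (1 / t k) *\<^sub>R (Y k - z)" for k
  have Y_eq: "Y k = z + t k *\<^sub>R W k" for k using t_pos[of k] by (simp add: W_def)
  have W_le: "norm (W k) \<le> norm h" for k
    using resolvent_step_norm_le[OF mono zs Y[of k] less_imp_le[OF t_pos[of k]]] t_pos[of k]
    by (simp add: Y_eq)
  show ?thesis
  proof (rule that[OF t_pos t_lim _ W_le])
    fix k
    have "dist z (z + t k *\<^sub>R W k) = t k * norm (W k)"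
      using t_pos[of k] by (simp add: dist_norm)
    also have "\<dots> \<le> c * norm h"
      using W_le[of k] t_pos[of k] t_le[of k] by (intro mult_mono) auto
    finally show "dist z (z + t k *\<^sub>R W k) < r" using c_small by simp
    show "(z, zs) + t k *\<^sub>R (W k, h - W k) \<in> graph_of T"
      using Y[of k] by (simp add: graph_of_def Y_eq algebra_simps)
  qed
qed

lemma contingent_direction_of_resolvent:
  fixes T :: "'a::euclidean_space \<Rightarrow> 'a set"
  assumes mono: "strongly_monotone_on UNIV 0 T" and res: "\<And>v. \<exists>y. v - y \<in> T y"
    and strong: "strongly_monotone_on (ball z r) \<mu> T" and r: "0 < r" and zs: "zs \<in> T z"
  obtains w where "(w, h - w) \<in> contingent_cone (graph_of T) (z, zs)"
    "\<mu> * (norm w)\<^sup>2 \<le> (h - w) \<bullet> w"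
proof -
  obtain t W where t_pos: "\<And>k. 0 < t k" and t_lim: "t \<longlonglongrightarrow> 0"
    and near: "\<And>k. dist z (z + t k *\<^sub>R W k) < r" and W_le: "\<And>k. norm (W k) \<le> norm h"
    and in_graph: "\<And>k. (z, zs) + t k *\<^sub>R (W k, h - W k) \<in> graph_of T"
    using resolvent_difference_quotients[OF mono res r zs, where h = h] by blast
  have W_strong: "\<mu> * (norm (W k))\<^sup>2 \<le> (h - W k) \<bullet> W k" for k
  proof -
    have "zs + t k *\<^sub>R (h - W k) \<in> T (z + t k *\<^sub>R W k)"
      using in_graph[of k] by (simp add: graph_of_def)
    then have "\<mu> * (norm ((z + t k *\<^sub>R W k) - z))\<^sup>2
        \<le> ((zs + t k *\<^sub>R (h - W k)) - zs) \<bullet> ((z + t k *\<^sub>R W k) - z)"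
      using near[of k] r by (intro strongly_monotone_onD[OF strong _ _ _ zs]) auto
    then have "(t k)\<^sup>2 * (\<mu> * (norm (W k))\<^sup>2) \<le> (t k)\<^sup>2 * ((h - W k) \<bullet> W k)"
      by (simp add: algebra_simps power2_eq_square)
    then show ?thesis using t_pos[of k] by simp
  qed
  obtain w \<sigma> where \<sigma>: "strict_mono \<sigma>" "(W \<circ> \<sigma>) \<longlonglongrightarrow> w"
    using seq_compactE[OF compact_imp_seq_compact[OF compact_cball[of 0 "norm h"]]] W_le
    by (metis mem_cball_0)
  show ?thesis
  proof
    show "(w, h - w) \<in> contingent_cone (graph_of T) (z, zs)"
      unfolding contingent_cone_def
    proof (intro CollectI exI conjI allI)
      show "(\<lambda>k. (W (\<sigma> k), h - W (\<sigma> k))) \<longlonglongrightarrow> (w, h - w)"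
        using \<sigma>(2) by (auto intro!: tendsto_intros simp: o_def)
    qed (use t_pos LIMSEQ_subseq_LIMSEQ[OF t_lim \<sigma>(1)] in_graph in auto)
    show "\<mu> * (norm w)\<^sup>2 \<le> (h - w) \<bullet> w"
    proof (rule tendsto_le[OF trivial_limit_sequentially])
      show "(\<lambda>k. (h - (W \<circ> \<sigma>) k) \<bullet> (W \<circ> \<sigma>) k) \<longlonglongrightarrow> (h - w) \<bullet> w"
        "(\<lambda>k. \<mu> * (norm ((W \<circ> \<sigma>) k))\<^sup>2) \<longlonglongrightarrow> \<mu> * (norm w)\<^sup>2"
        using \<sigma>(2) by (auto intro!: tendsto_intros simp: o_def)
    qed (simp add: W_strong)
  qed
qed

lemma inner_bound_from_test_direction:
  fixes a c w :: "'a::real_inner"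
  assumes \<mu>: "0 \<le> \<mu>"
    and tangent: "\<mu> * (norm w)\<^sup>2 \<le> ((a + (1 + 2 * \<mu>) *\<^sub>R c) - w) \<bullet> w"
    and normal: "a \<bullet> w + c \<bullet> ((a + (1 + 2 * \<mu>) *\<^sub>R c) - w) \<le> 0"
  shows "\<mu> * (norm c)\<^sup>2 \<le> - (a \<bullet> c)"
proof -
  have "(1 + \<mu>) * (norm (w - c))\<^sup>2 + \<mu> * (norm c)\<^sup>2 + a \<bullet> c
      = (a \<bullet> w + c \<bullet> ((a + (1 + 2 * \<mu>) *\<^sub>R c) - w))
        - (((a + (1 + 2 * \<mu>) *\<^sub>R c) - w) \<bullet> w - \<mu> * (norm w)\<^sup>2)"
    unfolding power2_norm_eq_inner
    by (simp add: inner_add_left inner_add_right inner_diff_left inner_diff_right inner_commute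
        algebra_simps)
  moreover have "0 \<le> (1 + \<mu>) * (norm (w - c))\<^sup>2" using \<mu> by simp
  ultimately show ?thesis using tangent normal by linarith
qed

lemma regular_normal_cone_graph_bound:
  fixes T :: "'a::euclidean_space \<Rightarrow> 'a set"
  assumes mono: "strongly_monotone_on UNIV 0 T" and res: "\<And>v. \<exists>y. v - y \<in> T y"
    and strong: "strongly_monotone_on (ball z r) \<mu> T" and r: "0 < r" and \<mu>: "0 \<le> \<mu>"
    and zs: "zs \<in> T z" and normal: "(a, c) \<in> regular_normal_cone (graph_of T) (z, zs)"
  shows "\<mu> * (norm c)\<^sup>2 \<le> - (a \<bullet> c)"
proof -
  define h where "h = a + (1 + 2 * \<mu>) *\<^sub>R c"
  obtain w where w: "(w, h - w) \<in> contingent_cone (graph_of T) (z, zs)"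
    and tangent: "\<mu> * (norm w)\<^sup>2 \<le> (h - w) \<bullet> w"
    using contingent_direction_of_resolvent[OF mono res strong r zs] .
  have "a \<bullet> w + c \<bullet> (h - w) \<le> 0"
    using normal w unfolding regular_normal_cone_def by auto
  with \<mu> tangent show ?thesis unfolding h_def by (rule inner_bound_from_test_direction)
qed

lemma limiting_normal_cone_graph_bound:
  fixes T :: "'a::euclidean_space \<Rightarrow> 'a set"
  assumes mono: "strongly_monotone_on UNIV 0 T" and res: "\<And>v. \<exists>y. v - y \<in> T y"
    and strong: "strongly_monotone_on (ball d r) \<mu> T" and r: "0 < r" and \<mu>: "0 \<le> \<mu>"
    and normal: "(u, - s) \<in> limiting_normal_cone (graph_of T) (d, ds)"
  shows "\<mu> * (norm s)\<^sup>2 \<le> u \<bullet> s"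
proof -
  obtain zk vk where graph: "\<And>k. zk k \<in> graph_of T"
    and regular: "\<And>k. vk k \<in> regular_normal_cone (graph_of T) (zk k)"
    and zk: "zk \<longlonglongrightarrow> (d, ds)" and vk: "vk \<longlonglongrightarrow> (u, - s)"
    using normal unfolding limiting_normal_cone_def by blast
  have "\<forall>\<^sub>F k in sequentially. dist (fst (zk k)) d < r / 2"
    using tendsto_fst[OF zk] r by (intro tendstoD) auto
  then have bound: "\<forall>\<^sub>F k in sequentially. \<mu> * (norm (snd (vk k)))\<^sup>2 \<le> - (fst (vk k) \<bullet> snd (vk k))"
  proof eventually_elim
    case (elim k)
    have "ball (fst (zk k)) (r / 2) \<subseteq> ball d r"
      using elim by (simp add: ball_subset_ball_iff dist_commute)
    then have "strongly_monotone_on (ball (fst (zk k)) (r / 2)) \<mu> T"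
      by (rule strongly_monotone_on_subset[OF strong])
    moreover have "snd (zk k) \<in> T (fst (zk k))" using graph[of k] by (auto simp: graph_of_def)
    ultimately show ?case
      using regular_normal_cone_graph_bound[OF mono res _ _ \<mu>, of "fst (zk k)" "r / 2"
          "snd (zk k)" "fst (vk k)" "snd (vk k)"] regular[of k] r by simp
  qed
  have u: "(\<lambda>k. fst (vk k)) \<longlonglongrightarrow> u" and s: "(\<lambda>k. snd (vk k)) \<longlonglongrightarrow> - s"
    using tendsto_fst[OF vk] tendsto_snd[OF vk] by simp_all
  have "\<mu> * (norm (- s))\<^sup>2 \<le> - (u \<bullet> - s)"
  proof (rule tendsto_le[OF trivial_limit_sequentially _ _ bound])
    show "(\<lambda>k. \<mu> * (norm (snd (vk k)))\<^sup>2) \<longlonglongrightarrow> \<mu> * (norm (- s))\<^sup>2"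
      using s by (intro tendsto_intros)
    show "(\<lambda>k. - (fst (vk k) \<bullet> snd (vk k))) \<longlonglongrightarrow> - (u \<bullet> - s)"
      using u s by (intro tendsto_intros)
  qed
  then show ?thesis by simp
qed

section \<open>The modulus mu_q\<close>

lemma antimono_tendsto_SUP_at_right:
  fixes g :: "real \<Rightarrow> 'b::{complete_linorder, linorder_topology}"
  assumes anti: "\<And>a b. x < a \<Longrightarrow> a \<le> b \<Longrightarrow> g b \<le> g a"
  shows "(g \<longlongrightarrow> (SUP \<rho>\<in>{x<..}. g \<rho>)) (at_right x)"
proof (rule order_tendstoI)
  fix c assume "c < (SUP \<rho>\<in>{x<..}. g \<rho>)"
  then obtain \<rho> where "x < \<rho>" "c < g \<rho>" by (auto simp: less_SUP_iff)
  then show "\<forall>\<^sub>F a in at_right x. c < g a"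
    unfolding eventually_at_right_field using anti by (meson order.strict_trans2 less_imp_le)
next
  fix c assume "(SUP \<rho>\<in>{x<..}. g \<rho>) < c"
  then show "\<forall>\<^sub>F a in at_right x. g a < c"
    unfolding eventually_at_right_field
    by (intro exI[of _ "x + 1"]) (auto intro: le_less_trans[OF SUP_upper])
qed

definition subdiff_modulus :: "('a::real_inner \<Rightarrow> ereal) \<Rightarrow> 'a \<Rightarrow> real \<Rightarrow> ereal" where
  "subdiff_modulus q d \<rho> = Inf {ereal (((d1s - d2s) \<bullet> (d1 - d2)) / (norm (d1 - d2))\<^sup>2) | d1 d2 d1s d2s.
             d1 \<in> cball d \<rho> \<and> d2 \<in> cball d \<rho> \<and> d1s \<in> subdiff q d1 \<and> d2s \<in> subdiff q d2
             \<and> d1 \<noteq> d2}"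

lemma mu_q_eq_SUP_subdiff_modulus: "mu_q q d = (SUP \<rho>\<in>{0<..}. subdiff_modulus q d \<rho>)"
proof -
  have "(subdiff_modulus q d \<longlongrightarrow> (SUP \<rho>\<in>{0<..}. subdiff_modulus q d \<rho>)) (at_right 0)"
  proof (rule antimono_tendsto_SUP_at_right)
    fix a b :: real assume "a \<le> b"
    then have "cball d a \<subseteq> cball d b" by (rule subset_cball)
    then show "subdiff_modulus q d b \<le> subdiff_modulus q d a"
      unfolding subdiff_modulus_def by (intro Inf_superset_mono) blast
  qed
  then show ?thesis
    unfolding mu_q_def subdiff_modulus_def[symmetric] by (rule tendsto_Lim[OF trivial_limit_at_right_real])
qed

lemma strongly_monotone_on_cball_if_less_mu_q:
  fixes q :: "real^'n \<Rightarrow> ereal"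
  assumes "ereal \<mu> < mu_q q d"
  obtains \<rho> where "0 < \<rho>" "strongly_monotone_on (cball d \<rho>) \<mu> (subdiff q)"
proof -
  obtain \<rho> where \<rho>: "0 < \<rho>" "ereal \<mu> < subdiff_modulus q d \<rho>"
    using assms by (auto simp: mu_q_eq_SUP_subdiff_modulus less_SUP_iff)
  have "\<mu> * (norm (d1 - d2))\<^sup>2 \<le> (d1s - d2s) \<bullet> (d1 - d2)"
    if "d1 \<in> cball d \<rho>" "d2 \<in> cball d \<rho>" "d1s \<in> subdiff q d1" "d2s \<in> subdiff q d2" for d1 d2 d1s d2s
  proof (cases "d1 = d2")
    case False
    then have "subdiff_modulus q d \<rho> \<le> ereal (((d1s - d2s) \<bullet> (d1 - d2)) / (norm (d1 - d2))\<^sup>2)"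
      unfolding subdiff_modulus_def using that by (intro Inf_lower) blast
    with \<rho>(2) have "ereal \<mu> < ereal (((d1s - d2s) \<bullet> (d1 - d2)) / (norm (d1 - d2))\<^sup>2)"
      by (rule order.strict_trans2)
    with False show ?thesis by (simp add: less_divide_eq less_imp_le)
  qed simp
  with \<rho>(1) show ?thesis using that unfolding strongly_monotone_on_def by blast
qed

lemma coderivative_subdiff_inner_ge:
  fixes q :: "real^'n \<Rightarrow> ereal"
  assumes cvx: "convex_efun q" and lsc: "lsc_fun q" and dom: "subdiff q d \<noteq> {}"
    and \<mu>: "ereal \<mu> < mu_q q d" and u: "u \<in> coderivative (subdiff q) d ds s"
  shows "\<mu> * (norm s)\<^sup>2 \<le> u \<bullet> s"
proof -
  obtain \<rho> where \<rho>: "0 < \<rho>" "strongly_monotone_on (cball d \<rho>) \<mu> (subdiff q)"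
    using \<mu> by (rule strongly_monotone_on_cball_if_less_mu_q)
  have "strongly_monotone_on (ball d \<rho>) (max 0 \<mu>) (subdiff q)"
  proof (cases "0 \<le> \<mu>")
    case True
    then show ?thesis using strongly_monotone_on_subset[OF \<rho>(2) ball_subset_cball] by simp
  next
    case False
    then show ?thesis using strongly_monotone_on_subset[OF subdiff_monotone] by simp
  qed
  then have "max 0 \<mu> * (norm s)\<^sup>2 \<le> u \<bullet> s"
    using limiting_normal_cone_graph_bound[OF subdiff_monotone subdiff_resolvent_exists[OF cvx lsc dom]
        _ \<rho>(1)] u
    by (simp add: coderivative_def)
  moreover have "\<mu> * (norm s)\<^sup>2 \<le> max 0 \<mu> * (norm s)\<^sup>2" by (intro mult_right_mono) auto
  ultimately show ?thesis by linarith
qed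

lemma mu_f_le_transpose:
  assumes "s \<in> sphere 0 1"
  shows "mu_f A \<le> (transpose A *v s) \<bullet> s"
proof -
  have "compact ((\<lambda>u. (A *v u) \<bullet> u) ` sphere 0 1)"
    by (intro compact_continuous_image continuous_intros) auto
  then have "mu_f A \<le> (A *v s) \<bullet> s"
    unfolding mu_f_def using assms by (intro cInf_lower bounded_imp_bdd_below compact_imp_bounded) auto
  also have "(A *v s) \<bullet> s = (transpose A *v s) \<bullet> s"
    using dot_lmul_matrix[of s A s] by (simp add: inner_commute)
  finally show ?thesis .
qed

theorem lemma4p4:
  fixes f :: "real^'n \<Rightarrow> real^'n" and J :: "real^'n \<Rightarrow> real^'n^'n"
    and q :: "real^'n \<Rightarrow> ereal" and x d ds :: "real^'n"
  assumes deriv: "\<And>y. (f has_derivative (\<lambda>h. J y *v h)) (at y)"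
    and C1: "continuous_on UNIV J"
    and mono: "monotone_map f"
    and proper: "proper_fun q" and cvx: "convex_efun q" and lsc: "lsc_fun q"
    and dom: "subdiff q d \<noteq> {}"
    and ds: "ds \<in> subdiff q d"
  shows "(INF s\<in>sphere 0 1. edist0 {transpose (J x) *v s + u | u. u \<in> coderivative (subdiff q) d ds s})
           \<ge> ereal (mu_f (J x)) + mu_q q d"
proof (rule INF_greatest)
  fix s :: "real^'n" assume s: "s \<in> sphere 0 1"
  show "ereal (mu_f (J x)) + mu_q q d
      \<le> edist0 {transpose (J x) *v s + u | u. u \<in> coderivative (subdiff q) d ds s}"
    unfolding edist0_def
  proof (rule INF_greatest)
    fix w assume "w \<in> {transpose (J x) *v s + u | u. u \<in> coderivative (subdiff q) d ds s}"
    then obtain u where w: "w = transpose (J x) *v s + u"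
      and u: "u \<in> coderivative (subdiff q) d ds s" by blast
    have "mu_q q d \<le> ereal (u \<bullet> s)"
    proof (rule dense_le)
      fix e assume "e < mu_q q d"
      then show "e \<le> ereal (u \<bullet> s)"
        using coderivative_subdiff_inner_ge[OF cvx lsc dom _ u] s by (cases e) auto
    qed
    moreover have "mu_f (J x) + u \<bullet> s \<le> norm w"
    proof -
      have "mu_f (J x) + u \<bullet> s \<le> w \<bullet> s"
        using mu_f_le_transpose[OF s] by (simp add: w inner_add_left)
      also have "\<dots> \<le> norm w" using norm_cauchy_schwarz[of w s] s by simp
      finally show ?thesis .
    qed
    ultimately show "ereal (mu_f (J x)) + mu_q q d \<le> ereal (norm w)"
      by (metis add_left_mono order.trans plus_ereal.simps(1) ereal_less_eq(3))
  qed
qed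

end
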